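(* Let $T_\sigma$ be a binary separating tree of a separable permutation $\sigma$ of size $k$, and let $\tau=\tau_1\cdots\tau_n$ be a permutation. Define, for each node $V$ of $T_\sigma$ and integers $i,j,a,b$, a pattern $M(V,i,j,a,b)$ as follows. If $i>j$ or $a>b$, $M(V,i,j,a,b)=\epsilon$ (empty pattern). Otherwise ($1\le i\le j\le n$, $1\le a\le b\le n$): if $V$ is a leaf, $M(V,i,j,a,b)=1$ if there is $h\in\{i,\dots,j\}$ with $a\le\tau_h\le b$ and $\epsilon$ otherwise; if $V$ is an internal node with left child $V_L$ and right child $V_R$, processed after its children, then $M(V,i,j,a,b)=\mathrm{Longest}\{M(V_L,i,h-1,a,c-1)\oplus M(V_R,h,j,c,b): i\le h\le j+1,\ a\le c\le b+1\}$ if $V$ is labeled $+$, and $M(V,i,j,a,b)=\mathrm{Longest}\{M(V_L,i,h-1,c,b)\ominus M(V_R,h,j,a,c-1): i\le h\le j+1,\ a\le c\le b+1\}$ if $V$ is labeled $-$. Then $M(\text{root of }T_\sigma,1,n,1,n)$ is a longest common pattern of $\sigma$ and $\tau$.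
   Context: A permutation $\pi=\pi_1\cdots\pi_k$ is a pattern of $\sigma$ if some subsequence of $\sigma$ is order-isomorphic to $\pi$; a longest common pattern of $\sigma$ and $\tau$ is a permutation of maximum length that is a pattern of both. A permutation is separable if it avoids $3\,1\,4\,2$ and $2\,4\,1\,3$. A binary separating tree of $\sigma=\sigma_1\cdots\sigma_k$ is an ordered binary tree with $k$ leaves (read left to right as $\sigma_1,\dots,\sigma_k$), internal nodes labeled $+$ or $-$, such that the entries below each node have values forming an interval and, at a $+$ (resp. $-$) node, values below the left child are all smaller (resp. larger) than those below the right child. For patterns $\pi$ of length $k$ and $\pi'$ of length $k'$: $\pi\oplus\pi'=\pi_1\cdots\pi_k(\pi'_1+k)\cdots(\pi'_{k'}+k)$ and $\pi\ominus\pi'=(\pi_1+k')\cdots(\pi_k+k')\pi'_1\cdots\pi'_{k'}$. $\mathrm{Longest}(S)$ denotes an element of maximal length of the finite set $S$ of patterns (e.g. the lexicographically smallest among those of maximal length). *)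

theory Defs
  imports Main "HOL-Library.Sublist"
begin

(* Permutations / patterns are lists of naturals; a permutation of size k is a
   list whose entries are exactly 1..k, each once.  The empty pattern is []. *)
definition is_perm :: "nat list \<Rightarrow> bool" where
  "is_perm xs \<longleftrightarrow> distinct xs \<and> set xs = {1..length xs}"

definition order_iso :: "nat list \<Rightarrow> nat list \<Rightarrow> bool" where
  "order_iso p q \<longleftrightarrow> length p = length q \<and>
     (\<forall>u<length p. \<forall>v<length p. p ! u < p ! v \<longleftrightarrow> q ! u < q ! v)"

definition is_pattern :: "nat list \<Rightarrow> nat list \<Rightarrow> bool" where
  "is_pattern p s \<longleftrightarrow> is_perm p \<and> (\<exists>q. subseq q s \<and> order_iso p q)"

definition is_lcp :: "nat list \<Rightarrow> nat list \<Rightarrow> nat list \<Rightarrow> bool" where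
  "is_lcp p s t \<longleftrightarrow> is_pattern p s \<and> is_pattern p t \<and>
     (\<forall>q. is_pattern q s \<and> is_pattern q t \<longrightarrow> length q \<le> length p)"

definition separable :: "nat list \<Rightarrow> bool" where
  "separable s \<longleftrightarrow> \<not> is_pattern [3,1,4,2] s \<and> \<not> is_pattern [2,4,1,3] s"

datatype sgn = Plus | Minus
datatype stree = Leaf | Node sgn stree stree

fun nleaves :: "stree \<Rightarrow> nat" where
  "nleaves Leaf = 1"
| "nleaves (Node s l r) = nleaves l + nleaves r"

(* sep_tree T xs: T is a binary separating tree whose leaves, read left to right,
   carry the entries of xs *)
fun sep_tree :: "stree \<Rightarrow> nat list \<Rightarrow> bool" where
  "sep_tree Leaf xs \<longleftrightarrow> length xs = 1"
| "sep_tree (Node s l r) xs \<longleftrightarrow>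
     (let ys = take (nleaves l) xs; zs = drop (nleaves l) xs in
       length xs = nleaves l + nleaves r \<and>
       (\<exists>a b. set xs = {a..b}) \<and>
       sep_tree l ys \<and> sep_tree r zs \<and>
       (s = Plus \<longrightarrow> (\<forall>y\<in>set ys. \<forall>z\<in>set zs. y < z)) \<and>
       (s = Minus \<longrightarrow> (\<forall>y\<in>set ys. \<forall>z\<in>set zs. y > z)))"

definition oplus :: "nat list \<Rightarrow> nat list \<Rightarrow> nat list" where
  "oplus p q = p @ map (\<lambda>x. x + length p) q"

definition ominus :: "nat list \<Rightarrow> nat list \<Rightarrow> nat list" where
  "ominus p q = map (\<lambda>x. x + length q) p @ q"

definition longest_selector :: "(nat list set \<Rightarrow> nat list) \<Rightarrow> bool" where
  "longest_selector L \<longleftrightarrow> (\<forall>S. finite S \<and> S \<noteq> {} \<longrightarrow>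
     L S \<in> S \<and> (\<forall>x\<in>S. length x \<le> length (L S)))"

(* The dynamic programme M(V,i,j,a,b); tau_h = tau ! (h-1) *)
fun M :: "(nat list set \<Rightarrow> nat list) \<Rightarrow> nat list \<Rightarrow> stree \<Rightarrow> int \<Rightarrow> int \<Rightarrow> int \<Rightarrow> int \<Rightarrow> nat list" where
  "M L \<tau> Leaf i j a b =
     (if i > j \<or> a > b then []
      else if (\<exists>h\<in>{i..j}. 1 \<le> h \<and> h \<le> int (length \<tau>) \<and>
                 a \<le> int (\<tau> ! (nat h - 1)) \<and> int (\<tau> ! (nat h - 1)) \<le> b) then [1] else [])"
| "M L \<tau> (Node s l r) i j a b =
     (if i > j \<or> a > b then []
      else if s = Plus then
        L {oplus (M L \<tau> l i (h-1) a (c-1)) (M L \<tau> r h j c b) | h c.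
             i \<le> h \<and> h \<le> j+1 \<and> a \<le> c \<and> c \<le> b+1}
      else
        L {ominus (M L \<tau> l i (h-1) c b) (M L \<tau> r h j a (c-1)) | h c.
             i \<le> h \<and> h \<le> j+1 \<and> a \<le> c \<and> c \<le> b+1})"

end

theory Submission
  imports Defs
begin

text \<open>
  We prove the stronger invariant that, for every node V of the separating tree and all
  i j a b, M(V,i,j,a,b) is a longest common pattern of the entries of \<sigma> below V and of the
  subsequence of \<tau> at positions [i,j] with values in [a,b] (the box), by induction on V.
  At a \<open>+\<close> node the entries below V split into a left block lying entirely below a right block,
  so every common pattern p splits as p1 \<oplus> p2 with p1 a pattern of the left block and p2 one of
  the right block. An occurrence of p1 \<oplus> p2 in the box splits at some position h and some value
  threshold c into an occurrence of p1 in the lower left sub-box and one of p2 in the upper right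
  sub-box, so by induction |p| is at most the length of the candidate indexed by (h,c).
  Conversely every candidate is a common pattern, hence Longest picks a longest one.
  \<open>-\<close> nodes are symmetric, with \<ominus> and the value ranges exchanged.
\<close>

lemma order_iso_length: "order_iso p q \<Longrightarrow> length p = length q"
  by (simp add: order_iso_def)

lemma order_iso_sym: "order_iso p q \<Longrightarrow> order_iso q p"
  by (simp add: order_iso_def)

lemma order_iso_shift_iff: "order_iso (map (\<lambda>x. x + k) p) q \<longleftrightarrow> order_iso p q"
  by (simp add: order_iso_def)

lemma order_iso_take: "order_iso p q \<Longrightarrow> order_iso (take k p) (take k q)"
  by (auto simp: order_iso_def)

lemma order_iso_drop: "order_iso p q \<Longrightarrow> order_iso (drop k p) (drop k q)"
  by (auto simp: order_iso_def)

lemma order_iso_appendD: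
  assumes "order_iso (u @ v) (q1 @ q2)" "length u = length q1"
  shows "order_iso u q1" "order_iso v q2"
  using order_iso_take[OF assms(1), of "length u"] order_iso_drop[OF assms(1), of "length u"] assms(2)
  by simp_all

lemma order_iso_nth: "order_iso p q \<Longrightarrow> a < length p \<Longrightarrow> b < length p \<Longrightarrow> p ! a < p ! b \<longleftrightarrow> q ! a < q ! b"
  by (simp add: order_iso_def)

lemma order_iso_append_cross:
  assumes "order_iso u q1" "order_iso v q2"
    and cross: "\<And>x y. x < length u \<Longrightarrow> y < length v \<Longrightarrow>
           (u ! x < v ! y \<longleftrightarrow> q1 ! x < q2 ! y) \<and> (v ! y < u ! x \<longleftrightarrow> q2 ! y < q1 ! x)"
  shows "order_iso (u @ v) (q1 @ q2)"
proof -
  have len: "length u = length q1" "length v = length q2"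
    using assms(1,2) by (simp_all add: order_iso_length)
  have "(u @ v) ! a < (u @ v) ! b \<longleftrightarrow> (q1 @ q2) ! a < (q1 @ q2) ! b"
    if "a < length (u @ v)" "b < length (u @ v)" for a b
  proof (cases "a < length u"; cases "b < length u")
    assume "a < length u" "b < length u"
    then show ?thesis using order_iso_nth[OF assms(1)] len by (simp add: nth_append)
  next
    assume "a < length u" "\<not> b < length u"
    then show ?thesis using cross[of a "b - length u"] that len by (simp add: nth_append)
  next
    assume "\<not> a < length u" "b < length u"
    then show ?thesis using cross[of b "a - length u"] that len by (simp add: nth_append)
  next
    assume "\<not> a < length u" "\<not> b < length u"
    then show ?thesis using order_iso_nth[OF assms(2), of "a - length u" "b - length u"] that len
      by (simp add: nth_append)
  qed
  then show ?thesis using len by (simp add: order_iso_def)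
qed

lemma order_iso_append:
  assumes "order_iso u q1" "order_iso v q2"
    and "(\<forall>x\<in>set u. \<forall>y\<in>set v. x < y) \<and> (\<forall>x\<in>set q1. \<forall>y\<in>set q2. x < y) \<or>
         (\<forall>x\<in>set u. \<forall>y\<in>set v. y < x) \<and> (\<forall>x\<in>set q1. \<forall>y\<in>set q2. y < x)"
  shows "order_iso (u @ v) (q1 @ q2)"
proof (rule order_iso_append_cross[OF assms(1,2)])
  fix x y assume "x < length u" "y < length v"
  then have "u ! x \<in> set u" "v ! y \<in> set v" "q1 ! x \<in> set q1" "q2 ! y \<in> set q2"
    using order_iso_length[OF assms(1)] order_iso_length[OF assms(2)] by simp_all
  then show "(u ! x < v ! y \<longleftrightarrow> q1 ! x < q2 ! y) \<and> (v ! y < u ! x \<longleftrightarrow> q2 ! y < q1 ! x)"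
    using assms(3) by (meson less_asym)
qed

lemma order_iso_append_separated:
  assumes "order_iso (u @ v) (q1 @ q2)" "length u = length q1"
  shows "\<forall>x\<in>set u. \<forall>y\<in>set v. x < y \<Longrightarrow> \<forall>x\<in>set q1. \<forall>y\<in>set q2. x < y"
    and "\<forall>x\<in>set u. \<forall>y\<in>set v. y < x \<Longrightarrow> \<forall>x\<in>set q1. \<forall>y\<in>set q2. y < x"
proof -
  have len: "length v = length q2"
    using assms order_iso_length by fastforce
  have cross: "(u ! x < v ! y \<longleftrightarrow> q1 ! x < q2 ! y) \<and> (v ! y < u ! x \<longleftrightarrow> q2 ! y < q1 ! x)"
    if "x < length q1" "y < length q2" for x y
    using order_iso_nth[OF assms(1), of x "length u + y"] order_iso_nth[OF assms(1), of "length u + y" x]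
      that assms(2) len by (simp add: nth_append)
  show "\<forall>x\<in>set q1. \<forall>y\<in>set q2. x < y" if "\<forall>x\<in>set u. \<forall>y\<in>set v. x < y"
    using that cross assms(2) len by (metis in_set_conv_nth)
  show "\<forall>x\<in>set q1. \<forall>y\<in>set q2. y < x" if "\<forall>x\<in>set u. \<forall>y\<in>set v. y < x"
    using that cross assms(2) len by (metis in_set_conv_nth)
qed

section \<open>Direct and skew sums of permutations\<close>

lemma is_perm_Nil: "is_perm []"
  by (simp add: is_perm_def)

lemma is_perm_append_commute: "is_perm (u @ v) \<longleftrightarrow> is_perm (v @ u)"
proof -
  have "distinct (u @ v) \<longleftrightarrow> distinct (v @ u)" "set (u @ v) = set (v @ u)"
    by auto
  then show ?thesis
    by (simp only: is_perm_def length_append add.commute)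
qed

lemma set_shift_perm:
  "is_perm q \<Longrightarrow> set (map (\<lambda>x. x + k) q) = {k + 1..k + length q}"
  by (simp add: is_perm_def add.commute)

lemma is_perm_shift_append:
  assumes "is_perm p" "is_perm q"
  shows "is_perm (p @ map (\<lambda>x. x + length p) q)"
proof -
  have "{1..length p} \<union> {length p + 1..length p + length q} = {1..length p + length q}"
    by auto
  then show ?thesis
    using assms set_shift_perm[OF assms(2), of "length p"] by (auto simp: is_perm_def distinct_map)
qed

lemma is_perm_oplus: "is_perm p \<Longrightarrow> is_perm q \<Longrightarrow> is_perm (oplus p q)"
  unfolding oplus_def by (rule is_perm_shift_append)

lemma is_perm_ominus: "is_perm p \<Longrightarrow> is_perm q \<Longrightarrow> is_perm (ominus p q)"
  unfolding ominus_def using is_perm_shift_append is_perm_append_commute by blast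

lemma initial_segment_of_interval:
  fixes A B :: "nat set"
  assumes "A \<union> B = {1..n}" "A \<inter> B = {}" "\<forall>x\<in>A. \<forall>y\<in>B. x < y"
  shows "A = {1..card A}"
proof -
  have fin: "finite A"
    using assms(1) by (metis finite_Un finite_atLeastAtMost)
  have "x \<in> {1..card A}" if x: "x \<in> A" for x
  proof -
    have "{1..x} \<subseteq> A"
    proof
      fix y assume y: "y \<in> {1..x}"
      moreover have "x \<le> n"
        using assms(1) x by auto
      ultimately have "y \<in> A \<union> B"
        using assms(1) by auto
      moreover have "y \<notin> B"
        using assms(3) x y by (meson atLeastAtMost_iff not_less)
      ultimately show "y \<in> A"
        by blast
    qed
    then have "x \<le> card A"
      using card_mono[OF fin] by (metis card_atLeastAtMost diff_Suc_1)
    then show ?thesis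
      using assms(1) x by auto
  qed
  then have "A \<subseteq> {1..card A}"
    by blast
  then show ?thesis
    using card_subset_eq[of "{1..card A}" A] by simp
qed

lemma is_perm_append_less:
  assumes perm: "is_perm (u @ v)" and less: "\<forall>x\<in>set u. \<forall>y\<in>set v. x < y"
  shows "\<exists>q. is_perm u \<and> is_perm q \<and> v = map (\<lambda>x. x + length u) q"
proof -
  let ?n = "length u + length v"
  have un: "set u \<union> set v = {1..?n}" and disj: "set u \<inter> set v = {}"
    and dist: "distinct u" "distinct v"
    using perm by (auto simp: is_perm_def)
  have set_u: "set u = {1..length u}"
    using initial_segment_of_interval[OF un disj less] dist(1) by (simp add: distinct_card)
  then have "set v = {1..?n} - {1..length u}"
    using un disj by blast
  also have "\<dots> = {length u + 1..?n}"
    by auto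
  finally have set_v: "set v = {length u + 1..?n}" .
  define q where "q = map (\<lambda>x. x - length u) v"
  have v: "v = map (\<lambda>x. x + length u) q"
    unfolding q_def map_map using set_v by (intro map_idI[symmetric]) auto
  have "is_perm q"
    using dist(2) set_v unfolding is_perm_def q_def
    by (auto simp: distinct_map inj_on_def image_iff intro!: bexI[where x="_ + length u"])
  then show ?thesis
    using set_u dist(1) v by (auto simp: is_perm_def)
qed

lemma is_perm_append_greater:
  assumes "is_perm (u @ v)" "\<forall>x\<in>set u. \<forall>y\<in>set v. y < x"
  shows "\<exists>p. is_perm p \<and> is_perm v \<and> u = map (\<lambda>x. x + length v) p"
  using is_perm_append_less[of v u] assms is_perm_append_commute by blast

section \<open>Patterns of concatenations\<close>

lemma set_mono_subseq: "subseq xs ys \<Longrightarrow> set xs \<subseteq> set ys"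
  by (induction rule: list_emb.induct) auto

lemma is_pattern_Nil: "is_pattern [] xs"
  unfolding is_pattern_def order_iso_def by (auto simp: is_perm_Nil intro: exI[of _ "[]"])

lemma is_pattern_length: "is_pattern p xs \<Longrightarrow> length p \<le> length xs"
  unfolding is_pattern_def using list_emb_length order_iso_length by fastforce

lemma is_pattern_subseq: "is_pattern p xs \<Longrightarrow> subseq xs ys \<Longrightarrow> is_pattern p ys"
  unfolding is_pattern_def using subseq_order.order_trans by blast

lemma is_pattern_oplus:
  assumes "is_pattern p ys" "is_pattern q zs" "\<forall>y\<in>set ys. \<forall>z\<in>set zs. y < z"
  shows "is_pattern (oplus p q) (ys @ zs)"
proof -
  obtain p' q' where p': "subseq p' ys" "order_iso p p'" and q': "subseq q' zs" "order_iso q q'"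
    using assms(1,2) by (auto simp: is_pattern_def)
  have perms: "is_perm p" "is_perm q"
    using assms(1,2) by (simp_all add: is_pattern_def)
  have "order_iso (p @ map (\<lambda>x. x + length p) q) (p' @ q')"
  proof (rule order_iso_append)
    show "order_iso (map (\<lambda>x. x + length p) q) q'"
      using q'(2) by (simp add: order_iso_shift_iff)
    show "(\<forall>x\<in>set p. \<forall>y\<in>set (map (\<lambda>x. x + length p) q). x < y) \<and> (\<forall>x\<in>set p'. \<forall>y\<in>set q'. x < y) \<or>
      (\<forall>x\<in>set p. \<forall>y\<in>set (map (\<lambda>x. x + length p) q). y < x) \<and> (\<forall>x\<in>set p'. \<forall>y\<in>set q'. y < x)"
    proof (rule disjI1, intro conjI)
      show "\<forall>x\<in>set p. \<forall>y\<in>set (map (\<lambda>x. x + length p) q). x < y"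
        using perms by (auto simp: is_perm_def)
      show "\<forall>x\<in>set p'. \<forall>y\<in>set q'. x < y"
        using assms(3) set_mono_subseq[OF p'(1)] set_mono_subseq[OF q'(1)] by blast
    qed
  qed fact
  then show ?thesis
    unfolding is_pattern_def oplus_def[symmetric]
    using is_perm_oplus[OF perms] list_emb_append_mono[OF p'(1) q'(1)] by blast
qed

lemma is_pattern_ominus:
  assumes "is_pattern p ys" "is_pattern q zs" "\<forall>y\<in>set ys. \<forall>z\<in>set zs. z < y"
  shows "is_pattern (ominus p q) (ys @ zs)"
proof -
  obtain p' q' where p': "subseq p' ys" "order_iso p p'" and q': "subseq q' zs" "order_iso q q'"
    using assms(1,2) by (auto simp: is_pattern_def)
  have perms: "is_perm p" "is_perm q"
    using assms(1,2) by (simp_all add: is_pattern_def)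
  have "order_iso (map (\<lambda>x. x + length q) p @ q) (p' @ q')"
  proof (rule order_iso_append)
    show "order_iso (map (\<lambda>x. x + length q) p) p'"
      using p'(2) by (simp add: order_iso_shift_iff)
    show "(\<forall>x\<in>set (map (\<lambda>x. x + length q) p). \<forall>y\<in>set q. x < y) \<and> (\<forall>x\<in>set p'. \<forall>y\<in>set q'. x < y) \<or>
      (\<forall>x\<in>set (map (\<lambda>x. x + length q) p). \<forall>y\<in>set q. y < x) \<and> (\<forall>x\<in>set p'. \<forall>y\<in>set q'. y < x)"
    proof (rule disjI2, intro conjI)
      show "\<forall>x\<in>set (map (\<lambda>x. x + length q) p). \<forall>y\<in>set q. y < x"
        using perms by (auto simp: is_perm_def)
      show "\<forall>x\<in>set p'. \<forall>y\<in>set q'. y < x"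
        using assms(3) set_mono_subseq[OF p'(1)] set_mono_subseq[OF q'(1)] by blast
    qed
  qed fact
  then show ?thesis
    unfolding is_pattern_def ominus_def[symmetric]
    using is_perm_ominus[OF perms] list_emb_append_mono[OF p'(1) q'(1)] by blast
qed

lemma order_iso_oplusD:
  assumes "is_perm p" "is_perm q" "order_iso (oplus p q) r"
  obtains r1 r2 where "r = r1 @ r2" "order_iso p r1" "order_iso q r2" "\<forall>x\<in>set r1. \<forall>y\<in>set r2. x < y"
proof
  let ?r1 = "take (length p) r" and ?r2 = "drop (length p) r"
  have iso: "order_iso (p @ map (\<lambda>x. x + length p) q) (?r1 @ ?r2)" and len: "length p = length ?r1"
    using assms(3) order_iso_length[OF assms(3)] by (simp_all add: oplus_def)
  show "r = ?r1 @ ?r2"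
    by simp
  show "order_iso p ?r1" "order_iso q ?r2"
    using order_iso_appendD[OF iso len] by (simp_all add: order_iso_shift_iff)
  show "\<forall>x\<in>set ?r1. \<forall>y\<in>set ?r2. x < y"
    using assms(1,2) by (intro order_iso_append_separated(1)[OF iso len]) (auto simp: is_perm_def)
qed

lemma order_iso_ominusD:
  assumes "is_perm p" "is_perm q" "order_iso (ominus p q) r"
  obtains r1 r2 where "r = r1 @ r2" "order_iso p r1" "order_iso q r2" "\<forall>x\<in>set r1. \<forall>y\<in>set r2. y < x"
proof
  let ?r1 = "take (length p) r" and ?r2 = "drop (length p) r"
  have iso: "order_iso (map (\<lambda>x. x + length q) p @ q) (?r1 @ ?r2)"
    and len: "length (map (\<lambda>x. x + length q) p) = length ?r1"
    using assms(3) order_iso_length[OF assms(3)] by (simp_all add: ominus_def)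
  show "r = ?r1 @ ?r2"
    by simp
  show "order_iso p ?r1" "order_iso q ?r2"
    using order_iso_appendD[OF iso len] by (simp_all add: order_iso_shift_iff)
  show "\<forall>x\<in>set ?r1. \<forall>y\<in>set ?r2. y < x"
    using assms(1,2) by (intro order_iso_append_separated(2)[OF iso len]) (auto simp: is_perm_def)
qed

lemma is_pattern_oplusE:
  assumes "is_pattern p (ys @ zs)" "\<forall>y\<in>set ys. \<forall>z\<in>set zs. y < z"
  obtains p1 p2 where "p = oplus p1 p2" "is_pattern p1 ys" "is_pattern p2 zs"
proof -
  obtain r where r: "subseq r (ys @ zs)" "order_iso p r" and perm: "is_perm p"
    using assms(1) by (auto simp: is_pattern_def)
  obtain r1 r2 where r12: "r = r1 @ r2" "subseq r1 ys" "subseq r2 zs"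
    using r(1) by (rule subseq_appendE)
  let ?u = "take (length r1) p" and ?v = "drop (length r1) p"
  have iso: "order_iso (?u @ ?v) (r1 @ r2)" and len: "length ?u = length r1"
    using r(2) order_iso_length[OF r(2)] r12(1) by simp_all
  have "\<forall>x\<in>set ?u. \<forall>y\<in>set ?v. x < y"
    using order_iso_append_separated(1)[OF order_iso_sym[OF iso] len[symmetric]]
      assms(2) set_mono_subseq[OF r12(2)] set_mono_subseq[OF r12(3)] by blast
  then obtain p2 where p2: "is_perm ?u" "is_perm p2" "?v = map (\<lambda>x. x + length ?u) p2"
    using is_perm_append_less[of ?u ?v] perm by auto
  have "p = oplus ?u p2"
    using p2(3) by (metis append_take_drop_id oplus_def)
  moreover have "is_pattern ?u ys" "is_pattern p2 zs"
    using order_iso_appendD[OF iso len] p2 r12(2,3) by (auto simp: is_pattern_def order_iso_shift_iff)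
  ultimately show ?thesis
    using that by blast
qed

lemma is_pattern_ominusE:
  assumes "is_pattern p (ys @ zs)" "\<forall>y\<in>set ys. \<forall>z\<in>set zs. z < y"
  obtains p1 p2 where "p = ominus p1 p2" "is_pattern p1 ys" "is_pattern p2 zs"
proof -
  obtain r where r: "subseq r (ys @ zs)" "order_iso p r" and perm: "is_perm p"
    using assms(1) by (auto simp: is_pattern_def)
  obtain r1 r2 where r12: "r = r1 @ r2" "subseq r1 ys" "subseq r2 zs"
    using r(1) by (rule subseq_appendE)
  let ?u = "take (length r1) p" and ?v = "drop (length r1) p"
  have iso: "order_iso (?u @ ?v) (r1 @ r2)" and len: "length ?u = length r1"
    using r(2) order_iso_length[OF r(2)] r12(1) by simp_all
  have "\<forall>x\<in>set ?u. \<forall>y\<in>set ?v. y < x"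
    using order_iso_append_separated(2)[OF order_iso_sym[OF iso] len[symmetric]]
      assms(2) set_mono_subseq[OF r12(2)] set_mono_subseq[OF r12(3)] by blast
  then obtain p1 where p1: "is_perm p1" "is_perm ?v" "?u = map (\<lambda>x. x + length ?v) p1"
    using is_perm_append_greater[of ?u ?v] perm by auto
  have "p = ominus p1 ?v"
    using p1(3) by (metis append_take_drop_id ominus_def)
  moreover have "is_pattern p1 ys" "is_pattern ?v zs"
    using order_iso_appendD[OF iso len] p1 r12(2,3) by (auto simp: is_pattern_def order_iso_shift_iff)
  ultimately show ?thesis
    using that by blast
qed

section \<open>Boxes of \<tau>\<close>

text \<open>The entries of \<tau> at the 1-based positions i..j, clipped to 1..length \<tau>.\<close>
definition slice :: "nat list \<Rightarrow> int \<Rightarrow> int \<Rightarrow> nat list" where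
  "slice \<tau> i j = drop (nat i - 1) (take (nat j) \<tau>)"

definition box :: "nat list \<Rightarrow> int \<Rightarrow> int \<Rightarrow> int \<Rightarrow> int \<Rightarrow> nat list" where
  "box \<tau> i j a b = filter (\<lambda>x. a \<le> int x \<and> int x \<le> b) (slice \<tau> i j)"

lemma in_set_slice:
  "x \<in> set (slice \<tau> i j) \<longleftrightarrow> (\<exists>h. i \<le> h \<and> h \<le> j \<and> 1 \<le> h \<and> h \<le> int (length \<tau>) \<and> x = \<tau> ! (nat h - 1))"
proof
  assume "x \<in> set (slice \<tau> i j)"
  then obtain k where k: "k < length (slice \<tau> i j)" "x = slice \<tau> i j ! k"
    by (auto simp: in_set_conv_nth)
  define n where "n = nat i - 1 + k"
  have "n < nat j" "n < length \<tau>"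
    using k(1) unfolding slice_def n_def by auto
  moreover have "x = \<tau> ! n"
    using k calculation unfolding slice_def n_def by auto
  moreover have "i \<le> int n + 1" "nat (int n + 1) - 1 = n"
    unfolding n_def by arith+
  ultimately show "\<exists>h. i \<le> h \<and> h \<le> j \<and> 1 \<le> h \<and> h \<le> int (length \<tau>) \<and> x = \<tau> ! (nat h - 1)"
    by (intro exI[of _ "int n + 1"]) auto
next
  assume "\<exists>h. i \<le> h \<and> h \<le> j \<and> 1 \<le> h \<and> h \<le> int (length \<tau>) \<and> x = \<tau> ! (nat h - 1)"
  then obtain h where h: "i \<le> h" "h \<le> j" "1 \<le> h" "h \<le> int (length \<tau>)" "x = \<tau> ! (nat h - 1)"
    by blast
  define l m where "l = nat i - 1" and "m = nat h - 1"
  have lm: "l \<le> m" "m < nat j" "m < length \<tau>"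
    using h unfolding l_def m_def by arith+
  have sl: "slice \<tau> i j = drop l (take (nat j) \<tau>)"
    by (simp add: slice_def l_def)
  have "m - l < length (slice \<tau> i j)" "x = slice \<tau> i j ! (m - l)"
    using lm h(5) unfolding m_def[symmetric] by (simp_all add: sl)
  then show "x \<in> set (slice \<tau> i j)"
    by (metis nth_mem)
qed

lemma box_eq_Nil_iff:
  "box \<tau> i j a b = [] \<longleftrightarrow>
    \<not> (\<exists>h\<in>{i..j}. 1 \<le> h \<and> h \<le> int (length \<tau>) \<and> a \<le> int (\<tau> ! (nat h - 1)) \<and> int (\<tau> ! (nat h - 1)) \<le> b)"
  unfolding box_def filter_empty_conv Ball_def in_set_slice by force

lemma box_empty: "j < i \<or> b < a \<Longrightarrow> box \<tau> i j a b = []"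
  unfolding box_eq_Nil_iff by auto

lemma drop_take_append_drop: "m \<le> n \<Longrightarrow> drop m (take n xs) @ drop n xs = drop m xs"
proof (cases "n \<le> length xs")
  case True
  assume "m \<le> n"
  then show ?thesis
    using True by (metis append_take_drop_id diff_is_0_eq drop_0 drop_append length_take min_absorb2)
next
  case False
  then show ?thesis
    by simp
qed

lemma slice_append:
  assumes "i \<le> h" "h \<le> j + 1"
  shows "slice \<tau> i j = slice \<tau> i (h - 1) @ slice \<tau> h j"
proof -
  have "nat i - 1 \<le> nat h - 1" "nat h - 1 \<le> nat j" "nat (h - 1) = nat h - 1"
    using assms by arith+
  then show ?thesis
    unfolding slice_def
    by (metis drop_take_append_drop min.absorb1 take_take)
qed

text \<open>The cut is placed at i + length us; this needs 1 \<le> i, since a slice never starts before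
  position 1. Hence the hypothesis 1 \<le> i in the correctness lemma below.\<close>
lemma subseq_slice_appendE:
  assumes "subseq (t1 @ t2) (slice \<tau> i j)" "1 \<le> i" "i \<le> j + 1"
  obtains h where "i \<le> h" "h \<le> j + 1" "subseq t1 (slice \<tau> i (h - 1))" "subseq t2 (slice \<tau> h j)"
proof -
  obtain us vs where uv: "slice \<tau> i j = us @ vs" "subseq t1 us" "subseq t2 vs"
    using list_emb_appendD[OF assms(1)] by blast
  define h where "h = i + int (length us)"
  have len: "length us + length vs = min (length \<tau>) (nat j) - (nat i - 1)"
    using arg_cong[OF uv(1), of length] by (simp add: slice_def)
  then have h: "i \<le> h" "h \<le> j + 1"
    using assms(2,3) unfolding h_def by linarith+
  have "length (slice \<tau> i (h - 1)) = length us"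
    using len assms(2) unfolding h_def slice_def by simp
  then have "slice \<tau> i (h - 1) = us" "slice \<tau> h j = vs"
    using slice_append[OF h, of \<tau>] uv(1) by simp_all
  then show ?thesis
    using that h uv(2,3) by simp
qed

lemma subseq_box_iff:
  "subseq t (box \<tau> i j a b) \<longleftrightarrow> subseq t (slice \<tau> i j) \<and> (\<forall>x\<in>set t. a \<le> int x \<and> int x \<le> b)"
proof
  assume t: "subseq t (box \<tau> i j a b)"
  show "subseq t (slice \<tau> i j) \<and> (\<forall>x\<in>set t. a \<le> int x \<and> int x \<le> b)"
    using subseq_order.order_trans[OF t[unfolded box_def] subseq_filter_left] set_mono_subseq[OF t]
    by (auto simp: box_def)
next
  assume t: "subseq t (slice \<tau> i j) \<and> (\<forall>x\<in>set t. a \<le> int x \<and> int x \<le> b)"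
  then have "filter (\<lambda>x. a \<le> int x \<and> int x \<le> b) t = t"
    by (simp add: filter_id_conv)
  then show "subseq t (box \<tau> i j a b)"
    using subseq_filter[of t "slice \<tau> i j"] t unfolding box_def by metis
qed

lemma subseq_box_append:
  assumes "i \<le> h" "h \<le> j + 1" "a \<le> a1" "b1 \<le> b" "a \<le> a2" "b2 \<le> b"
  shows "subseq (box \<tau> i (h - 1) a1 b1 @ box \<tau> h j a2 b2) (box \<tau> i j a b)"
proof -
  have "subseq (box \<tau> i (h - 1) a1 b1 @ box \<tau> h j a2 b2) (slice \<tau> i j)"
    unfolding slice_append[OF assms(1,2)] box_def
    by (intro list_emb_append_mono subseq_filter_left)
  moreover have "\<forall>x\<in>set (box \<tau> i (h - 1) a1 b1 @ box \<tau> h j a2 b2). a \<le> int x \<and> int x \<le> b"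
    using assms(3-6) by (auto simp: box_def)
  ultimately show ?thesis
    by (simp add: subseq_box_iff)
qed

lemma separating_threshold:
  fixes A B :: "nat set"
  assumes "finite B" "\<forall>x\<in>A. \<forall>y\<in>B. x < y" "\<forall>x\<in>A \<union> B. a \<le> int x \<and> int x \<le> b" "a \<le> b + 1"
  obtains c where "a \<le> c" "c \<le> b + 1"
    "\<forall>x\<in>A. a \<le> int x \<and> int x \<le> c - 1" "\<forall>y\<in>B. c \<le> int y \<and> int y \<le> b"
proof (cases "B = {}")
  case True
  then show ?thesis
    using that[of "b + 1"] assms(3,4) by auto
next
  case False
  have min: "Min B \<in> B" "\<forall>y\<in>B. Min B \<le> y"
    using assms(1) False by simp_all
  show ?thesis
  proof (rule that[of "int (Min B)"])
    have "a \<le> int (Min B)" "int (Min B) \<le> b"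
      using min(1) assms(3) by auto
    then show "a \<le> int (Min B)" "int (Min B) \<le> b + 1"
      by simp_all
    show "\<forall>y\<in>B. int (Min B) \<le> int y \<and> int y \<le> b"
      using min assms(3) by auto
    show "\<forall>x\<in>A. a \<le> int x \<and> int x \<le> int (Min B) - 1"
    proof
      fix x assume x: "x \<in> A"
      then have "x < Min B"
        using assms(2) min(1) by blast
      then show "a \<le> int x \<and> int x \<le> int (Min B) - 1"
        using assms(3) x by auto
    qed
  qed
qed

lemma is_pattern_box_oplusE:
  assumes "is_perm p" "is_perm q" "is_pattern (oplus p q) (box \<tau> i j a b)"
    and "1 \<le> i" "i \<le> j + 1" "a \<le> b + 1"
  obtains h c where "i \<le> h" "h \<le> j + 1" "a \<le> c" "c \<le> b + 1"
    "is_pattern p (box \<tau> i (h - 1) a (c - 1))" "is_pattern q (box \<tau> h j c b)"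
proof -
  obtain r where r: "subseq r (box \<tau> i j a b)" "order_iso (oplus p q) r"
    using assms(3) by (auto simp: is_pattern_def)
  obtain r1 r2 where r12: "r = r1 @ r2" "order_iso p r1" "order_iso q r2"
    "\<forall>x\<in>set r1. \<forall>y\<in>set r2. x < y"
    using order_iso_oplusD[OF assms(1,2) r(2)] .
  have sl: "subseq (r1 @ r2) (slice \<tau> i j)"
    and vals: "\<forall>x\<in>set r1 \<union> set r2. a \<le> int x \<and> int x \<le> b"
    using r(1) r12(1) by (auto simp: subseq_box_iff)
  obtain h where h: "i \<le> h" "h \<le> j + 1" "subseq r1 (slice \<tau> i (h - 1))" "subseq r2 (slice \<tau> h j)"
    using subseq_slice_appendE[OF sl assms(4,5)] .
  obtain c where c: "a \<le> c" "c \<le> b + 1"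
    "\<forall>x\<in>set r1. a \<le> int x \<and> int x \<le> c - 1" "\<forall>y\<in>set r2. c \<le> int y \<and> int y \<le> b"
    using separating_threshold[OF finite_set r12(4) vals assms(6)] .
  have "is_pattern p (box \<tau> i (h - 1) a (c - 1))" "is_pattern q (box \<tau> h j c b)"
    using assms(1,2) r12(2,3) h(3,4) c(3,4) by (auto simp: is_pattern_def subseq_box_iff)
  then show ?thesis
    using that h(1,2) c(1,2) by blast
qed

lemma is_pattern_box_ominusE:
  assumes "is_perm p" "is_perm q" "is_pattern (ominus p q) (box \<tau> i j a b)"
    and "1 \<le> i" "i \<le> j + 1" "a \<le> b + 1"
  obtains h c where "i \<le> h" "h \<le> j + 1" "a \<le> c" "c \<le> b + 1"
    "is_pattern p (box \<tau> i (h - 1) c b)" "is_pattern q (box \<tau> h j a (c - 1))"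
proof -
  obtain r where r: "subseq r (box \<tau> i j a b)" "order_iso (ominus p q) r"
    using assms(3) by (auto simp: is_pattern_def)
  obtain r1 r2 where r12: "r = r1 @ r2" "order_iso p r1" "order_iso q r2"
    "\<forall>x\<in>set r2. \<forall>y\<in>set r1. x < y"
    using order_iso_ominusD[OF assms(1,2) r(2)] by (metis (full_types))
  have sl: "subseq (r1 @ r2) (slice \<tau> i j)"
    and vals: "\<forall>x\<in>set r2 \<union> set r1. a \<le> int x \<and> int x \<le> b"
    using r(1) r12(1) by (auto simp: subseq_box_iff)
  obtain h where h: "i \<le> h" "h \<le> j + 1" "subseq r1 (slice \<tau> i (h - 1))" "subseq r2 (slice \<tau> h j)"
    using subseq_slice_appendE[OF sl assms(4,5)] .
  obtain c where c: "a \<le> c" "c \<le> b + 1"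
    "\<forall>x\<in>set r2. a \<le> int x \<and> int x \<le> c - 1" "\<forall>y\<in>set r1. c \<le> int y \<and> int y \<le> b"
    using separating_threshold[OF finite_set r12(4) vals assms(6)] .
  have "is_pattern p (box \<tau> i (h - 1) c b)" "is_pattern q (box \<tau> h j a (c - 1))"
    using assms(1,2) r12(2,3) h(3,4) c(3,4) by (auto simp: is_pattern_def subseq_box_iff)
  then show ?thesis
    using that h(1,2) c(1,2) by blast
qed

section \<open>Correctness of the dynamic programme\<close>

lemma is_lcp_Nil: "is_lcp [] xs []"
  by (auto simp: is_lcp_def is_pattern_Nil dest: is_pattern_length)

lemma is_lcp_longest_selector:
  assumes "longest_selector L" "finite S" "S \<noteq> {}"
    and "\<forall>p\<in>S. is_pattern p xs \<and> is_pattern p ys"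
    and "\<forall>q. is_pattern q xs \<and> is_pattern q ys \<longrightarrow> (\<exists>p\<in>S. length q \<le> length p)"
  shows "is_lcp (L S) xs ys"
proof -
  have "L S \<in> S" "\<forall>p\<in>S. length p \<le> length (L S)"
    using assms(1-3) unfolding longest_selector_def by blast+
  then show ?thesis
    using assms(4,5) unfolding is_lcp_def by (meson le_trans)
qed

lemma M_Leaf: "M L \<tau> Leaf i j a b = (if box \<tau> i j a b = [] then [] else [1])"
  by (auto simp: box_eq_Nil_iff)

lemma is_pattern_singleton: "z \<in> set w \<Longrightarrow> is_pattern [1] w"
  unfolding is_pattern_def is_perm_def order_iso_def
  by (auto simp: subseq_singleton_left intro!: exI[of _ "[z]"])

lemma is_lcp_M_Leaf:
  assumes "sep_tree Leaf xs"
  shows "is_lcp (M L \<tau> Leaf i j a b) xs (box \<tau> i j a b)"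
proof (cases "box \<tau> i j a b = []")
  case True
  then show ?thesis
    unfolding M_Leaf by (simp add: is_lcp_Nil)
next
  case False
  have "length xs = 1"
    using assms by simp
  then have "is_pattern [1] xs"
    using is_pattern_singleton[of "hd xs" xs] by (cases xs) auto
  moreover have "is_pattern [1] (box \<tau> i j a b)"
    using False by (metis list.set_sel(1) is_pattern_singleton)
  moreover have "M L \<tau> Leaf i j a b = [1]"
    using False by (simp only: M_Leaf if_False)
  ultimately show ?thesis
    using \<open>length xs = 1\<close> by (auto simp: is_lcp_def dest: is_pattern_length)
qed

lemma length_oplus [simp]: "length (oplus p q) = length p + length q"
  by (simp add: oplus_def)

lemma length_ominus [simp]: "length (ominus p q) = length p + length q"
  by (simp add: ominus_def)

lemma is_lcp_M_Plus:
  assumes L: "longest_selector L"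
    and IH_l: "\<And>i j a b. 1 \<le> i \<Longrightarrow> is_lcp (M L \<tau> l i j a b) ys (box \<tau> i j a b)"
    and IH_r: "\<And>i j a b. 1 \<le> i \<Longrightarrow> is_lcp (M L \<tau> r i j a b) zs (box \<tau> i j a b)"
    and sep: "\<forall>y\<in>set ys. \<forall>z\<in>set zs. y < z"
    and ij: "1 \<le> i" "i \<le> j" and ab: "a \<le> b"
  shows "is_lcp (M L \<tau> (Node Plus l r) i j a b) (ys @ zs) (box \<tau> i j a b)"
proof -
  define cand where "cand h c = oplus (M L \<tau> l i (h - 1) a (c - 1)) (M L \<tau> r h j c b)" for h c
  define S where "S = {cand h c | h c. i \<le> h \<and> h \<le> j + 1 \<and> a \<le> c \<and> c \<le> b + 1}"
  have M: "M L \<tau> (Node Plus l r) i j a b = L S"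
    using ij ab by (simp add: S_def cand_def)
  have S: "S = (\<lambda>(h, c). cand h c) ` ({i..j + 1} \<times> {a..b + 1})"
    unfolding S_def by fastforce
  have "is_pattern (cand h c) (ys @ zs) \<and> is_pattern (cand h c) (box \<tau> i j a b)"
    if hc: "i \<le> h" "h \<le> j + 1" "a \<le> c" "c \<le> b + 1" for h c
  proof
    have l: "is_lcp (M L \<tau> l i (h - 1) a (c - 1)) ys (box \<tau> i (h - 1) a (c - 1))"
      and r: "is_lcp (M L \<tau> r h j c b) zs (box \<tau> h j c b)"
      using IH_l IH_r ij hc by simp_all
    then show "is_pattern (cand h c) (ys @ zs)"
      unfolding cand_def is_lcp_def using is_pattern_oplus sep by blast
    have "\<forall>y\<in>set (box \<tau> i (h - 1) a (c - 1)). \<forall>z\<in>set (box \<tau> h j c b). y < z"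
      by (auto simp: box_def)
    then have "is_pattern (cand h c) (box \<tau> i (h - 1) a (c - 1) @ box \<tau> h j c b)"
      unfolding cand_def using l r is_pattern_oplus by (simp add: is_lcp_def)
    then show "is_pattern (cand h c) (box \<tau> i j a b)"
      using is_pattern_subseq subseq_box_append hc by simp
  qed
  then have patterns: "\<forall>p\<in>S. is_pattern p (ys @ zs) \<and> is_pattern p (box \<tau> i j a b)"
    by (auto simp: S_def)
  have "\<exists>p\<in>S. length q \<le> length p"
    if q: "is_pattern q (ys @ zs)" "is_pattern q (box \<tau> i j a b)" for q
  proof -
    obtain q1 q2 where q12: "q = oplus q1 q2" "is_pattern q1 ys" "is_pattern q2 zs"
      using is_pattern_oplusE[OF q(1) sep] .
    have perms: "is_perm q1" "is_perm q2"
      using q12 by (simp_all add: is_pattern_def)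
    obtain h c where hc: "i \<le> h" "h \<le> j + 1" "a \<le> c" "c \<le> b + 1"
      "is_pattern q1 (box \<tau> i (h - 1) a (c - 1))" "is_pattern q2 (box \<tau> h j c b)"
      using is_pattern_box_oplusE[OF perms q(2)[unfolded q12(1)]] ij ab by auto
    have "length q1 \<le> length (M L \<tau> l i (h - 1) a (c - 1))" "length q2 \<le> length (M L \<tau> r h j c b)"
      using IH_l[of i "h - 1" a "c - 1"] IH_r[of h j c b] q12(2,3) hc ij by (simp_all add: is_lcp_def)
    then have "length q \<le> length (cand h c)"
      by (simp add: q12(1) cand_def)
    then show ?thesis
      using hc(1-4) by (auto simp: S_def)
  qed
  then show ?thesis
    unfolding M using is_lcp_longest_selector[OF L _ _ patterns] ij ab S by auto
qed

lemma is_lcp_M_Minus: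
  assumes L: "longest_selector L"
    and IH_l: "\<And>i j a b. 1 \<le> i \<Longrightarrow> is_lcp (M L \<tau> l i j a b) ys (box \<tau> i j a b)"
    and IH_r: "\<And>i j a b. 1 \<le> i \<Longrightarrow> is_lcp (M L \<tau> r i j a b) zs (box \<tau> i j a b)"
    and sep: "\<forall>y\<in>set ys. \<forall>z\<in>set zs. z < y"
    and ij: "1 \<le> i" "i \<le> j" and ab: "a \<le> b"
  shows "is_lcp (M L \<tau> (Node Minus l r) i j a b) (ys @ zs) (box \<tau> i j a b)"
proof -
  define cand where "cand h c = ominus (M L \<tau> l i (h - 1) c b) (M L \<tau> r h j a (c - 1))" for h c
  define S where "S = {cand h c | h c. i \<le> h \<and> h \<le> j + 1 \<and> a \<le> c \<and> c \<le> b + 1}"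
  have M: "M L \<tau> (Node Minus l r) i j a b = L S"
    using ij ab by (simp add: S_def cand_def)
  have S: "S = (\<lambda>(h, c). cand h c) ` ({i..j + 1} \<times> {a..b + 1})"
    unfolding S_def by fastforce
  have "is_pattern (cand h c) (ys @ zs) \<and> is_pattern (cand h c) (box \<tau> i j a b)"
    if hc: "i \<le> h" "h \<le> j + 1" "a \<le> c" "c \<le> b + 1" for h c
  proof
    have l: "is_lcp (M L \<tau> l i (h - 1) c b) ys (box \<tau> i (h - 1) c b)"
      and r: "is_lcp (M L \<tau> r h j a (c - 1)) zs (box \<tau> h j a (c - 1))"
      using IH_l IH_r ij hc by simp_all
    then show "is_pattern (cand h c) (ys @ zs)"
      unfolding cand_def is_lcp_def using is_pattern_ominus sep by blast
    have "\<forall>y\<in>set (box \<tau> i (h - 1) c b). \<forall>z\<in>set (box \<tau> h j a (c - 1)). z < y"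
      by (auto simp: box_def)
    then have "is_pattern (cand h c) (box \<tau> i (h - 1) c b @ box \<tau> h j a (c - 1))"
      unfolding cand_def using l r is_pattern_ominus by (simp add: is_lcp_def)
    then show "is_pattern (cand h c) (box \<tau> i j a b)"
      using is_pattern_subseq subseq_box_append hc by simp
  qed
  then have patterns: "\<forall>p\<in>S. is_pattern p (ys @ zs) \<and> is_pattern p (box \<tau> i j a b)"
    by (auto simp: S_def)
  have "\<exists>p\<in>S. length q \<le> length p"
    if q: "is_pattern q (ys @ zs)" "is_pattern q (box \<tau> i j a b)" for q
  proof -
    obtain q1 q2 where q12: "q = ominus q1 q2" "is_pattern q1 ys" "is_pattern q2 zs"
      using is_pattern_ominusE[OF q(1) sep] .
    have perms: "is_perm q1" "is_perm q2"
      using q12 by (simp_all add: is_pattern_def)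
    obtain h c where hc: "i \<le> h" "h \<le> j + 1" "a \<le> c" "c \<le> b + 1"
      "is_pattern q1 (box \<tau> i (h - 1) c b)" "is_pattern q2 (box \<tau> h j a (c - 1))"
      using is_pattern_box_ominusE[OF perms q(2)[unfolded q12(1)]] ij ab by auto
    have "length q1 \<le> length (M L \<tau> l i (h - 1) c b)" "length q2 \<le> length (M L \<tau> r h j a (c - 1))"
      using IH_l[of i "h - 1" c b] IH_r[of h j a "c - 1"] q12(2,3) hc ij by (simp_all add: is_lcp_def)
    then have "length q \<le> length (cand h c)"
      by (simp add: q12(1) cand_def)
    then show ?thesis
      using hc(1-4) by (auto simp: S_def)
  qed
  then show ?thesis
    unfolding M using is_lcp_longest_selector[OF L _ _ patterns] ij ab S by auto
qed

lemma is_lcp_M: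
  assumes "longest_selector L" "sep_tree T xs" "1 \<le> i"
  shows "is_lcp (M L \<tau> T i j a b) xs (box \<tau> i j a b)"
  using assms(2,3)
proof (induction T arbitrary: xs i j a b)
  case Leaf
  then show ?case
    using is_lcp_M_Leaf by blast
next
  case (Node s l r)
  let ?ys = "take (nleaves l) xs" and ?zs = "drop (nleaves l) xs"
  have sub: "sep_tree l ?ys" "sep_tree r ?zs"
    and sep: "s = Plus \<Longrightarrow> \<forall>y\<in>set ?ys. \<forall>z\<in>set ?zs. y < z"
      "s = Minus \<Longrightarrow> \<forall>y\<in>set ?ys. \<forall>z\<in>set ?zs. z < y"
    using Node.prems(1) by (simp_all add: Let_def)
  note IH = Node.IH(1)[OF sub(1)] Node.IH(2)[OF sub(2)]
  show ?case
  proof (cases "i \<le> j \<and> a \<le> b")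
    case False
    then have "j < i \<or> b < a"
      by auto
    then show ?thesis
      by (simp add: box_empty is_lcp_Nil)
  next
    case True
    then show ?thesis
    proof (cases s)
      case Plus
      have "is_lcp (M L \<tau> (Node Plus l r) i j a b) (?ys @ ?zs) (box \<tau> i j a b)"
        using True by (intro is_lcp_M_Plus[OF assms(1) IH sep(1)[OF Plus] Node.prems(2)]) simp_all
      then show ?thesis
        using Plus by (simp only: append_take_drop_id)
    next
      case Minus
      have "is_lcp (M L \<tau> (Node Minus l r) i j a b) (?ys @ ?zs) (box \<tau> i j a b)"
        using True by (intro is_lcp_M_Minus[OF assms(1) IH sep(2)[OF Minus] Node.prems(2)]) simp_all
      then show ?thesis
        using Minus by (simp only: append_take_drop_id)
    qed
  qed
qed

lemma box_whole_perm: "is_perm \<tau> \<Longrightarrow> box \<tau> 1 (int (length \<tau>)) 1 (int (length \<tau>)) = \<tau>"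
  by (auto simp: box_def slice_def is_perm_def filter_id_conv)

theorem proposition3:
  fixes \<sigma> \<tau> :: "nat list" and T :: stree and L :: "nat list set \<Rightarrow> nat list"
  assumes "is_perm \<sigma>" and "separable \<sigma>" and "sep_tree T \<sigma>"
    and "is_perm \<tau>"
    and "longest_selector L"
  shows "is_lcp (M L \<tau> T 1 (int (length \<tau>)) 1 (int (length \<tau>))) \<sigma> \<tau>"
  using is_lcp_M[OF assms(5,3), of 1 \<tau> "int (length \<tau>)" 1 "int (length \<tau>)"]
  by (simp add: box_whole_perm[OF assms(4)])

end
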